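(* Let $f\colon\mathbb{N}\to\mathbb{R}$ be a superlinear function with $f(r)\geq 1+3r$ for all $r\in\mathbb{N}$. Then every finite graph $G$ is a minor of a finite graph $\tilde G$ with growth $f_{\tilde G}(r)\leq f(r)$ for every positive integer $r$.
   Context: $\mathbb{N}$ is the set of positive integers. A function $f\colon\mathbb{N}\to\mathbb{R}$ is superlinear if $f(x)/x\to\infty$ as $x\to\infty$. The growth of a finite graph $G$ is the function $f_G\colon\mathbb{N}\to\mathbb{N}$ where $f_G(r)$ is the maximum of $|V(H)|$ over all subgraphs $H$ of $G$ of radius at most $r$. A graph $H$ is a minor of $G$ if $H$ is isomorphic to a graph obtained from a subgraph of $G$ by contracting edges. *)

theory Defs
  imports Complex_Main
begin

type_synonym 'a graph = "'a set \<times> 'a set set"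

definition verts :: "'a graph \<Rightarrow> 'a set" where "verts G = fst G"
definition edges :: "'a graph \<Rightarrow> 'a set set" where "edges G = snd G"

definition finite_graph :: "'a graph \<Rightarrow> bool" where
  "finite_graph G \<longleftrightarrow> finite (verts G) \<and>
     (\<forall>e\<in>edges G. e \<subseteq> verts G \<and> card e = 2)"

definition subgraph :: "'a graph \<Rightarrow> 'a graph \<Rightarrow> bool" where
  "subgraph H G \<longleftrightarrow> verts H \<subseteq> verts G \<and> edges H \<subseteq> edges G \<and>
     (\<forall>e\<in>edges H. e \<subseteq> verts H)"

text \<open>\<open>walk_within H x y n\<close>: y is reachable from x in H by a walk of length at most n.\<close>
inductive walk_within :: "'a graph \<Rightarrow> 'a \<Rightarrow> 'a \<Rightarrow> nat \<Rightarrow> bool" for H where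
  here: "x \<in> verts H \<Longrightarrow> walk_within H x x n"
| step: "{x, z} \<in> edges H \<Longrightarrow> walk_within H z y n \<Longrightarrow> walk_within H x y (Suc n)"

definition radius_le :: "'a graph \<Rightarrow> nat \<Rightarrow> bool" where
  "radius_le H r \<longleftrightarrow> (\<exists>c\<in>verts H. \<forall>v\<in>verts H. walk_within H c v r)"

definition growth :: "'a graph \<Rightarrow> nat \<Rightarrow> nat" where
  "growth G r = Max (insert 0 {card (verts H) | H. subgraph H G \<and> radius_le H r})"

text \<open>Contracting the edge {u,v}: v is merged into u (loops removed, parallel edges merged).\<close>
definition contract :: "'a graph \<Rightarrow> 'a \<Rightarrow> 'a \<Rightarrow> 'a graph" where
  "contract G u v = (verts G - {v},
     {e'. \<exists>e\<in>edges G. e' = (\<lambda>x. if x = v then u else x) ` e \<and> card e' = 2})"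

inductive contracts_to :: "'a graph \<Rightarrow> 'a graph \<Rightarrow> bool" where
  refl: "contracts_to G G"
| step: "contracts_to G H \<Longrightarrow> {u, v} \<in> edges H \<Longrightarrow> u \<noteq> v \<Longrightarrow>
     contracts_to G (contract H u v)"

definition graph_iso :: "'b graph \<Rightarrow> 'a graph \<Rightarrow> bool" where
  "graph_iso H K \<longleftrightarrow> (\<exists>\<phi>. bij_betw \<phi> (verts H) (verts K) \<and>
     (\<forall>x\<in>verts H. \<forall>y\<in>verts H. {x, y} \<in> edges H \<longleftrightarrow> {\<phi> x, \<phi> y} \<in> edges K))"

definition minor :: "'b graph \<Rightarrow> 'a graph \<Rightarrow> bool" where
  "minor H G \<longleftrightarrow> (\<exists>S K. subgraph S G \<and> contracts_to S K \<and> graph_iso H K)"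

definition superlinear :: "(nat \<Rightarrow> real) \<Rightarrow> bool" where
  "superlinear f \<longleftrightarrow> filterlim (\<lambda>x. f x / real x) at_top sequentially"

end

theory Submission
  imports Defs "HOL-Library.Countable"
begin

text \<open>Stretch every vertex of \<open>G\<close> into a path of branch vertices, one for each edge of \<open>G\<close>,
  and let each edge of \<open>G\<close> start and end at its own branch vertices: the resulting graph has
  maximum degree 3 and contracts back to \<open>G\<close>. Now subdivide every edge into a path of length
  \<open>L\<close>. Branch vertices are then at distance at least \<open>L\<close> from each other, so a ball of radius
  \<open>r \<le> L / 2\<close> contains at most one of them and hence at most \<open>1 + 3 r\<close> vertices. For larger
  \<open>r\<close> the whole graph has \<open>O(L) = O(r)\<close> vertices, which is below \<open>f r\<close> if \<open>L\<close> was chosen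
  large enough, by superlinearity of \<open>f\<close>.\<close>

section \<open>Walks and balls\<close>

lemma walk_within_verts:
  assumes "\<forall>e\<in>edges G. e \<subseteq> verts G" "walk_within G x y n"
  shows "x \<in> verts G" "y \<in> verts G"
  using assms(2) by induction (use assms(1) in auto)

lemma walk_within_0: "walk_within G x y 0 \<Longrightarrow> x = y"
  by (erule walk_within.cases) auto

lemma walk_within_Suc: "walk_within G x y n \<Longrightarrow> walk_within G x y (Suc n)"
  by (induction rule: walk_within.induct) (auto intro: walk_within.intros)

lemma walk_within_mono: "walk_within G x y n \<Longrightarrow> n \<le> m \<Longrightarrow> walk_within G x y m"
  by (induction m) (auto simp: le_Suc_eq intro: walk_within_Suc)

lemma walk_within_snoc:
  assumes "\<forall>e\<in>edges G. e \<subseteq> verts G" "walk_within G x y n" "{y, w} \<in> edges G"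
  shows "walk_within G x w (Suc n)"
  using assms(2,3)
proof induction
  case (here x n)
  then have "w \<in> verts G" using assms(1) by blast
  then show ?case using here by (blast intro: walk_within.intros)
qed (auto intro: walk_within.step)

lemma walk_within_Suc_cases:
  assumes "\<forall>e\<in>edges G. e \<subseteq> verts G" "walk_within G x v (Suc n)"
  shows "walk_within G x v n \<or> (\<exists>w. walk_within G x w n \<and> {w, v} \<in> edges G)"
  using assms(2)
proof (induction x v "Suc n" arbitrary: n rule: walk_within.induct)
  case (here x)
  then show ?case by (auto intro: walk_within.here)
next
  case (step x z y n)
  show ?case
  proof (cases n)
    case 0
    then have "z = y" using step.hyps(2) by (simp add: walk_within_0)
    moreover have "x \<in> verts G" using step.hyps(1) assms(1) by blast
    then have "walk_within G x x 0" by (rule walk_within.here)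
    ultimately show ?thesis using step.hyps(1) 0 by blast
  next
    case (Suc n')
    then show ?thesis using step.hyps(1) step.hyps(3)[of n'] by (auto intro: walk_within.step)
  qed
qed

lemma walk_within_sym:
  assumes "\<forall>e\<in>edges G. e \<subseteq> verts G" "walk_within G x y n"
  shows "walk_within G y x n"
  using assms(2)
proof induction
  case (step x z y n)
  then show ?case using walk_within_snoc[OF assms(1), of y z n x] by (simp add: insert_commute)
qed (rule walk_within.here)

lemma walk_within_trans:
  "walk_within G x y n \<Longrightarrow> walk_within G y z m \<Longrightarrow> walk_within G x z (n + m)"
  by (induction rule: walk_within.induct) (auto intro: walk_within.step walk_within_mono)

lemma walk_within_subgraph:
  "walk_within H x y n \<Longrightarrow> subgraph H G \<Longrightarrow> walk_within G x y n"
  by (induction rule: walk_within.induct) (auto simp: subgraph_def intro: walk_within.intros)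

definition neighbours :: "'v graph \<Rightarrow> 'v \<Rightarrow> 'v set" where
  "neighbours G v = {w. {v, w} \<in> edges G}"

definition graph_ball :: "'v graph \<Rightarrow> 'v \<Rightarrow> nat \<Rightarrow> 'v set" where
  "graph_ball G c r = {v. walk_within G c v r}"

lemma graph_ball_subset_verts:
  "\<forall>e\<in>edges G. e \<subseteq> verts G \<Longrightarrow> graph_ball G c r \<subseteq> verts G"
  unfolding graph_ball_def by (auto dest: walk_within_verts(2))

lemma graph_ball_mono: "k \<le> k' \<Longrightarrow> graph_ball G c k \<subseteq> graph_ball G c k'"
  unfolding graph_ball_def by (auto intro: walk_within_mono)

lemma graph_ball_0: "c \<in> verts G \<Longrightarrow> graph_ball G c 0 = {c}"
  by (auto simp: graph_ball_def dest: walk_within_0 intro: walk_within.here)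

lemma graph_ball_Suc:
  assumes "\<forall>e\<in>edges G. e \<subseteq> verts G"
  shows "graph_ball G c (Suc k) = graph_ball G c k \<union> (\<Union>v\<in>graph_ball G c k. neighbours G v)"
proof (intro equalityI subsetI)
  fix w assume "w \<in> graph_ball G c (Suc k)"
  then show "w \<in> graph_ball G c k \<union> (\<Union>v\<in>graph_ball G c k. neighbours G v)"
    using walk_within_Suc_cases[OF assms] by (auto simp: graph_ball_def neighbours_def)
next
  fix w assume "w \<in> graph_ball G c k \<union> (\<Union>v\<in>graph_ball G c k. neighbours G v)"
  then show "w \<in> graph_ball G c (Suc k)"
    using walk_within_snoc[OF assms] walk_within_Suc[of G c w k] by (auto simp: graph_ball_def neighbours_def)
qed

locale subcubic =
  fixes G :: "'v graph" and branch :: "'v set"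
  assumes finite_graph: "finite_graph G"
    and card_neighbours_le_3: "v \<in> verts G \<Longrightarrow> card (neighbours G v) \<le> 3"
    and card_neighbours_le_2: "v \<in> verts G \<Longrightarrow> v \<notin> branch \<Longrightarrow> card (neighbours G v) \<le> 2"
begin

lemma edges_subset_verts: "\<forall>e\<in>edges G. e \<subseteq> verts G"
  using finite_graph by (simp add: finite_graph_def)

lemma finite_graph_ball: "finite (graph_ball G c r)"
  using graph_ball_subset_verts[OF edges_subset_verts] finite_graph
  by (auto simp: finite_graph_def intro: finite_subset)

lemma finite_neighbours: "finite (neighbours G v)"
proof -
  have "neighbours G v \<subseteq> verts G" using edges_subset_verts by (auto simp: neighbours_def)
  then show ?thesis using finite_graph by (auto simp: finite_graph_def intro: finite_subset)
qed

lemma card_neighbours_le: "v \<in> verts G \<Longrightarrow> card (neighbours G v) \<le> 2 + of_bool (v \<in> branch)"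
  using card_neighbours_le_2 card_neighbours_le_3 by (cases "v \<in> branch") auto

lemma card_neighbours_Diff_le:
  assumes "u \<in> X" "u \<in> neighbours G v" "v \<in> verts G"
  shows "card (neighbours G v - X) \<le> 1 + of_bool (v \<in> branch)"
proof -
  have "card (neighbours G v - X) \<le> card (neighbours G v - {u})"
    using assms(1) finite_neighbours by (intro card_mono) auto
  also have "\<dots> = card (neighbours G v) - 1" using assms(2) finite_neighbours by simp
  finally show ?thesis using card_neighbours_le[OF assms(3)] by simp
qed

text \<open>Each vertex of a shell has a neighbour in the previous shell, so at most one of its
  neighbours (two for a branch vertex) lies in the next shell.\<close>

lemma card_shell_le:
  assumes c: "c \<in> verts G"
  shows "card (graph_ball G c (Suc k) - graph_ball G c k) \<le> 2 + card (graph_ball G c k \<inter> branch)"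
proof (induction k)
  case 0
  have "card (graph_ball G c 1 - graph_ball G c 0) \<le> card (neighbours G c)"
    using finite_neighbours c by (intro card_mono) (auto simp: graph_ball_Suc[OF edges_subset_verts] graph_ball_0)
  also have "\<dots> \<le> 2 + card (graph_ball G c 0 \<inter> branch)"
    using card_neighbours_le[OF c] c by (cases "c \<in> branch") (auto simp: graph_ball_0)
  finally show ?case by simp
next
  case (Suc k)
  define W where "W k = graph_ball G c k" for k
  define D where "D k = W (Suc k) - W k" for k
  have W_Suc: "W (Suc k) = W k \<union> (\<Union>v\<in>W k. neighbours G v)" for k
    unfolding W_def by (rule graph_ball_Suc[OF edges_subset_verts])
  have finD: "finite (D k)" using finite_graph_ball by (simp add: D_def W_def)
  have "D (Suc k) \<subseteq> (\<Union>w\<in>D k. neighbours G w - W k)"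
    using W_Suc[of "Suc k"] W_Suc[of k] by (auto simp: D_def)
  then have "card (D (Suc k)) \<le> card (\<Union>w\<in>D k. neighbours G w - W k)"
    using finD finite_neighbours by (intro card_mono) auto
  also have "\<dots> \<le> (\<Sum>w\<in>D k. card (neighbours G w - W k))"
    by (rule card_UN_le[OF finD])
  also have "\<dots> \<le> (\<Sum>w\<in>D k. 1 + of_bool (w \<in> branch))"
  proof (rule sum_mono)
    fix w assume "w \<in> D k"
    then obtain u where "u \<in> W k" "u \<in> neighbours G w"
      using W_Suc[of k] by (auto simp: D_def neighbours_def insert_commute)
    moreover have "w \<in> verts G"
      using \<open>w \<in> D k\<close> graph_ball_subset_verts[OF edges_subset_verts] by (auto simp: D_def W_def)
    ultimately show "card (neighbours G w - W k) \<le> 1 + of_bool (w \<in> branch)"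
      by (rule card_neighbours_Diff_le)
  qed
  also have "\<dots> = card (D k) + card (D k \<inter> branch)"
    using finD by (simp only: sum.distrib sum_of_bool_eq) (simp add: Int_def)
  also have "\<dots> \<le> 2 + (card (W k \<inter> branch) + card (D k \<inter> branch))"
    using Suc.IH by (simp add: D_def W_def)
  also have "card (W k \<inter> branch) + card (D k \<inter> branch) = card (W (Suc k) \<inter> branch)"
  proof -
    have "W (Suc k) \<inter> branch = (W k \<inter> branch) \<union> (D k \<inter> branch)"
      using graph_ball_mono[of k "Suc k" G c] by (auto simp: D_def W_def)
    then show ?thesis using finD finite_graph_ball by (subst card_Un_disjoint[symmetric]) (auto simp: D_def W_def)
  qed
  finally show ?case by (simp add: D_def W_def)
qed

context
  fixes L :: nat
  assumes branch_far_apart: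
    "\<And>b b' n. b \<in> branch \<Longrightarrow> b' \<in> branch \<Longrightarrow> b \<noteq> b' \<Longrightarrow> walk_within G b b' n \<Longrightarrow> L \<le> n"
begin

lemma card_graph_ball_Int_branch_le_1:
  assumes "2 * k < L"
  shows "card (graph_ball G c k \<inter> branch) \<le> 1"
proof -
  have "b = b'" if "b \<in> graph_ball G c k \<inter> branch" "b' \<in> graph_ball G c k \<inter> branch" for b b'
  proof (rule ccontr)
    assume "b \<noteq> b'"
    have "walk_within G b c k" "walk_within G c b' k"
      using that walk_within_sym[OF edges_subset_verts] by (auto simp: graph_ball_def)
    then have "walk_within G b b' (k + k)" by (rule walk_within_trans)
    then show False using branch_far_apart that \<open>b \<noteq> b'\<close> assms by fastforce
  qed
  then show ?thesis using finite_graph_ball by (auto simp: card_le_Suc0_iff_eq)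
qed

text \<open>Within radius \<open>r - 1\<close> there is at most one branch vertex, so every shell up to
  radius \<open>r\<close> has at most three vertices.\<close>

lemma card_graph_ball_le:
  assumes c: "c \<in> verts G" and "2 * r \<le> L"
  shows "card (graph_ball G c r) \<le> 1 + 3 * r"
  using assms(2)
proof (induction r)
  case 0
  then show ?case using c by (simp add: graph_ball_0)
next
  case (Suc k)
  have "graph_ball G c (Suc k) = graph_ball G c k \<union> (graph_ball G c (Suc k) - graph_ball G c k)"
    using graph_ball_mono[of k "Suc k" G c] by auto
  then have "card (graph_ball G c (Suc k))
      = card (graph_ball G c k) + card (graph_ball G c (Suc k) - graph_ball G c k)"
    using finite_graph_ball by (metis Diff_disjoint card_Un_disjoint finite_Diff)
  also have "\<dots> \<le> 1 + 3 * k + 3"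
    using Suc card_shell_le[OF c, of k] card_graph_ball_Int_branch_le_1[of k c] by simp
  finally show ?case by simp
qed

end

end

lemma finite_growth_candidates:
  assumes "finite_graph G"
  shows "finite (insert 0 {card (verts H) | H. subgraph H G \<and> radius_le H r})"
proof -
  have "{card (verts H) | H. subgraph H G \<and> radius_le H r} \<subseteq> {..card (verts G)}"
    using assms by (auto simp: finite_graph_def subgraph_def intro: card_mono)
  then show ?thesis by (meson finite_atMost finite_insert finite_subset)
qed

lemma growth_leI:
  assumes "finite_graph G"
    and "\<And>H. subgraph H G \<Longrightarrow> radius_le H r \<Longrightarrow> card (verts H) \<le> B"
  shows "growth G r \<le> B"
  using finite_growth_candidates[OF assms(1)] assms(2)
  unfolding growth_def by (subst Max_le_iff) auto

lemma card_le_growth: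
  assumes "finite_graph G" "subgraph H G" "radius_le H r"
  shows "card (verts H) \<le> growth G r"
proof -
  have "card (verts H) \<in> insert 0 {card (verts H) | H. subgraph H G \<and> radius_le H r}"
    using assms by blast
  with finite_growth_candidates[OF assms(1)] show ?thesis
    unfolding growth_def by (rule Max_ge)
qed

lemma growth_le_card_verts: "finite_graph G \<Longrightarrow> growth G r \<le> card (verts G)"
  by (rule growth_leI) (auto simp: finite_graph_def subgraph_def intro: card_mono)

lemma growth_le_card_graph_ball:
  assumes "finite_graph G" and "\<And>c. c \<in> verts G \<Longrightarrow> card (graph_ball G c r) \<le> B"
  shows "growth G r \<le> B"
proof (rule growth_leI[OF assms(1)])
  fix H assume H: "subgraph H G" "radius_le H r"
  then obtain c where c: "c \<in> verts H" "\<forall>v\<in>verts H. walk_within H c v r"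
    by (auto simp: radius_le_def)
  have "verts H \<subseteq> graph_ball G c r"
    using c walk_within_subgraph[OF _ H(1)] by (auto simp: graph_ball_def)
  moreover have "graph_ball G c r \<subseteq> verts G"
    using assms(1) by (intro graph_ball_subset_verts) (simp add: finite_graph_def)
  ultimately have "card (verts H) \<le> card (graph_ball G c r)"
    using assms(1) by (intro card_mono) (auto simp: finite_graph_def intro: finite_subset)
  also have "\<dots> \<le> B" using c H(1) assms(2) by (auto simp: subgraph_def)
  finally show "card (verts H) \<le> B" .
qed

section \<open>Relabelling vertices\<close>

definition map_graph :: "('a \<Rightarrow> 'b) \<Rightarrow> 'a graph \<Rightarrow> 'b graph" where
  "map_graph h G = (h ` verts G, (\<lambda>e. h ` e) ` edges G)"

lemma verts_map_graph [simp]: "verts (map_graph h G) = h ` verts G"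
  and edges_map_graph [simp]: "edges (map_graph h G) = (\<lambda>e. h ` e) ` edges G"
  by (auto simp: map_graph_def verts_def edges_def)

lemma finite_graph_map_graph:
  assumes "inj h" "finite_graph G"
  shows "finite_graph (map_graph h G)"
proof -
  have "card (h ` e) = card e" for e using assms(1) by (simp add: card_image inj_on_subset)
  then show ?thesis using assms(2) by (auto simp: finite_graph_def)
qed

lemma walk_within_map_graph:
  "walk_within H x y n \<Longrightarrow> walk_within (map_graph h H) (h x) (h y) n"
proof (induction rule: walk_within.induct)
  case (here x n)
  then show ?case by (intro walk_within.here) simp
next
  case (step x z y n)
  have "{h x, h z} \<in> edges (map_graph h H)"
    using imageI[OF step(1), of "\<lambda>e. h ` e"] by simp
  then show ?case using step(3) by (rule walk_within.step)
qed

lemma growth_map_graph_le: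
  assumes inj: "inj h" and G: "finite_graph G"
  shows "growth (map_graph h G) r \<le> growth G r"
proof (rule growth_leI[OF finite_graph_map_graph[OF inj G]])
  fix H assume sub: "subgraph H (map_graph h G)" and rad: "radius_le H r"
  define H' where "H' = map_graph (inv h) H"
  have inv_image_image: "inv h ` h ` X = X" for X using inj by (simp add: image_image)
  have "subgraph H' G"
  proof -
    have "verts H' \<subseteq> verts G"
      using sub inv_image_image unfolding H'_def subgraph_def by (metis image_mono verts_map_graph)
    moreover have "edges H' \<subseteq> edges G"
      using sub inv_image_image by (auto simp: H'_def subgraph_def)
    moreover have "\<forall>e\<in>edges H'. e \<subseteq> verts H'"
      using sub unfolding H'_def subgraph_def by (simp add: image_mono)
    ultimately show ?thesis by (simp add: subgraph_def)
  qed
  moreover have "radius_le H' r"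
    using rad walk_within_map_graph unfolding radius_le_def H'_def by fastforce
  moreover have "card (verts H') = card (verts H)"
  proof -
    have "verts H \<subseteq> range h" using sub by (auto simp: subgraph_def)
    then have "inj_on (inv h) (verts H)" by (rule inj_on_inv_into)
    then show ?thesis by (simp add: H'_def card_image)
  qed
  ultimately show "card (verts H) \<le> growth G r" using card_le_growth[OF G] by metis
qed

lemma map_graph_contract:
  assumes inj: "inj h"
  shows "map_graph h (contract H u v) = contract (map_graph h H) (h u) (h v)"
proof -
  define g where "g = (\<lambda>x. if x = v then u else x)"
  define g' where "g' = (\<lambda>x. if x = h v then h u else x)"
  have comm: "h ` g ` e = g' ` h ` e" for e
  proof -
    have "h (g x) = g' (h x)" for x using inj by (auto simp: g_def g'_def inj_eq)
    then show ?thesis by (simp add: image_image)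
  qed
  have card_h: "card (h ` X) = card X" for X using inj by (simp add: card_image inj_on_subset)
  have "h ` (verts H - {v}) = h ` verts H - {h v}"
    using inj by (simp add: image_set_diff)
  moreover have "(\<lambda>e. h ` e) ` {e'. \<exists>e\<in>edges H. e' = g ` e \<and> card e' = 2}
      = {e'. \<exists>e\<in>(\<lambda>e. h ` e) ` edges H. e' = g' ` e \<and> card e' = 2}"
    using comm card_h by (auto simp: image_iff) metis+
  ultimately show ?thesis
    unfolding contract_def map_graph_def by (simp add: g_def g'_def verts_def edges_def)
qed

lemma contracts_to_map_graph:
  assumes inj: "inj h"
  shows "contracts_to S K \<Longrightarrow> contracts_to (map_graph h S) (map_graph h K)"
proof (induction rule: contracts_to.induct)
  case (refl G)
  then show ?case by (rule contracts_to.refl)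
next
  case (step G H u v)
  have "{h u, h v} \<in> edges (map_graph h H)"
    using imageI[OF step(2), of "\<lambda>e. h ` e"] by simp
  moreover have "h u \<noteq> h v" using step(3) inj by (simp add: inj_eq)
  ultimately have "contracts_to (map_graph h G) (contract (map_graph h H) (h u) (h v))"
    using step(4) by (rule contracts_to.step[rotated])
  then show ?case by (simp add: map_graph_contract[OF inj])
qed

lemma graph_iso_map_graph:
  assumes inj: "inj h" and iso: "graph_iso G K"
  shows "graph_iso G (map_graph h K)"
proof -
  obtain \<phi> where \<phi>: "bij_betw \<phi> (verts G) (verts K)"
    "\<forall>x\<in>verts G. \<forall>y\<in>verts G. {x, y} \<in> edges G \<longleftrightarrow> {\<phi> x, \<phi> y} \<in> edges K"
    using iso by (auto simp: graph_iso_def)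
  have "bij_betw (h \<circ> \<phi>) (verts G) (h ` verts K)"
    using \<phi>(1) inj by (meson bij_betw_comp_iff bij_betw_imageI inj_on_subset subset_UNIV)
  moreover have "{h a, h b} \<in> (\<lambda>e. h ` e) ` edges K \<longleftrightarrow> {a, b} \<in> edges K" for a b
    using inj_image_mem_iff[of "\<lambda>e. h ` e" "{a, b}" "edges K"] inj
    by (simp add: inj_on_image)
  ultimately show ?thesis using \<phi>(2) unfolding graph_iso_def by (intro exI[of _ "h \<circ> \<phi>"]) auto
qed

lemma minor_map_graph:
  assumes inj: "inj h" and "minor G G'"
  shows "minor G (map_graph h G')"
proof -
  obtain S K where S: "subgraph S G'" "contracts_to S K" "graph_iso G K"
    using assms(2) by (auto simp: minor_def)
  have "subgraph (map_graph h S) (map_graph h G')"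
    using S(1) unfolding subgraph_def by (simp add: image_mono)
  then show ?thesis
    using contracts_to_map_graph[OF inj S(2)] graph_iso_map_graph[OF inj S(3)]
    unfolding minor_def by blast
qed

section \<open>Contraction onto representatives\<close>

definition quotient_graph :: "('v \<Rightarrow> 'v) \<Rightarrow> 'v graph \<Rightarrow> 'v graph" where
  "quotient_graph \<rho> G = (\<rho> ` verts G, (\<lambda>e. \<rho> ` e) ` {e \<in> edges G. card (\<rho> ` e) = 2})"

lemma verts_quotient_graph [simp]: "verts (quotient_graph \<rho> G) = \<rho> ` verts G"
  and edges_quotient_graph [simp]:
    "edges (quotient_graph \<rho> G) = (\<lambda>e. \<rho> ` e) ` {e \<in> edges G. card (\<rho> ` e) = 2}"
  by (auto simp: quotient_graph_def verts_def edges_def)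

lemma quotient_graph_id: "finite_graph G \<Longrightarrow> quotient_graph (\<lambda>x. x) G = G"
  by (cases G) (auto simp: quotient_graph_def verts_def edges_def finite_graph_def)

lemma quotient_graph_cong:
  assumes "\<And>x. x \<in> verts G \<Longrightarrow> \<rho> x = \<sigma> x" "\<forall>e\<in>edges G. e \<subseteq> verts G"
  shows "quotient_graph \<rho> G = quotient_graph \<sigma> G"
proof -
  have eq: "\<rho> ` e = \<sigma> ` e" if "e \<subseteq> verts G" for e
    using assms(1) that by (intro image_cong) auto
  then have "{e \<in> edges G. card (\<rho> ` e) = 2} = {e \<in> edges G. card (\<sigma> ` e) = 2}"
    using assms(2) by auto
  moreover have "(\<lambda>e. \<rho> ` e) ` {e \<in> edges G. card (\<sigma> ` e) = 2}
      = (\<lambda>e. \<sigma> ` e) ` {e \<in> edges G. card (\<sigma> ` e) = 2}"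
    by (rule image_cong[OF HOL.refl]) (use eq assms(2) in blast)
  moreover have "\<rho> ` verts G = \<sigma> ` verts G"
    using eq by blast
  ultimately show ?thesis by (simp add: quotient_graph_def)
qed

lemma quotient_graph_quotient_graph:
  assumes "\<forall>e\<in>edges G. card e = 2"
  shows "quotient_graph g (quotient_graph \<rho> G) = quotient_graph (g \<circ> \<rho>) G"
proof -
  have "card (\<rho> ` e) = 2" if "e \<in> edges G" "card (g ` \<rho> ` e) = 2" for e
  proof -
    have "finite e" using assms that(1) by (metis card.infinite zero_neq_numeral)
    then have "card (g ` \<rho> ` e) \<le> card (\<rho> ` e)" "card (\<rho> ` e) \<le> card e"
      by (simp_all add: card_image_le)
    then show ?thesis using assms that by fastforce
  qed
  then have "{e' \<in> (\<lambda>e. \<rho> ` e) ` {e \<in> edges G. card (\<rho> ` e) = 2}. card (g ` e') = 2}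
      = (\<lambda>e. \<rho> ` e) ` {e \<in> edges G. card (g ` \<rho> ` e) = 2}"
    by auto
  then show ?thesis by (simp add: quotient_graph_def verts_def edges_def image_comp)
qed

lemma contract_eq_quotient_graph:
  assumes "u \<in> verts H" "u \<noteq> v"
  shows "contract H u v = quotient_graph (\<lambda>x. if x = v then u else x) H"
proof -
  define g where "g x = (if x = v then u else x)" for x
  have "g ` verts H = verts H - {v}"
    using assms by (auto simp: g_def)
  moreover have "{e'. \<exists>e\<in>edges H. e' = g ` e \<and> card e' = 2}
      = (\<lambda>e. g ` e) ` {e \<in> edges H. card (g ` e) = 2}"
    by blast
  ultimately show ?thesis by (simp add: contract_def quotient_graph_def g_def[abs_def])
qed

definition retract_on :: "'v set \<Rightarrow> ('v \<Rightarrow> 'v) \<Rightarrow> 'v \<Rightarrow> 'v" where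
  "retract_on Y \<phi> x = (if x \<in> Y then \<phi> x else x)"

lemma contracts_to_quotient_graph_insert:
  assumes G: "finite_graph G"
    and \<phi>_R: "\<And>x. x \<in> verts G \<Longrightarrow> \<phi> x \<in> R" and \<phi>_id: "\<And>r. r \<in> R \<Longrightarrow> \<phi> r = r"
    and Y: "Y \<subseteq> verts G - R" and v: "v \<in> verts G - R" "v \<notin> Y"
    and w: "{w, v} \<in> edges G" "\<phi> w = \<phi> v" "w \<in> R \<union> Y"
    and IH: "contracts_to G (quotient_graph (retract_on Y \<phi>) G)"
  shows "contracts_to G (quotient_graph (retract_on (insert v Y) \<phi>) G)"
proof -
  have E: "\<forall>e\<in>edges G. e \<subseteq> verts G" and E2: "\<forall>e\<in>edges G. card e = 2"
    using G by (auto simp: finite_graph_def)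
  define u where "u = \<phi> v"
  have u: "u \<in> R" "u \<noteq> v" "u \<notin> Y" using \<phi>_R[of v] v Y by (auto simp: u_def)
  have w_u: "retract_on Y \<phi> w = u"
    using w \<phi>_id Y by (auto simp: retract_on_def u_def)
  moreover have "w \<in> verts G" using w(1) E by blast
  ultimately have u_vert: "u \<in> verts (quotient_graph (retract_on Y \<phi>) G)"
    by force
  have "retract_on Y \<phi> ` {w, v} = {u, v}"
    using w_u v(2) by (simp add: retract_on_def[of Y \<phi> v])
  then have "{u, v} \<in> edges (quotient_graph (retract_on Y \<phi>) G)"
    using w(1) u(2) by (auto intro!: image_eqI[of _ _ "{w, v}"])
  then have "contracts_to G (contract (quotient_graph (retract_on Y \<phi>) G) u v)"
    using IH u(2) by (blast intro: contracts_to.step)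
  also have "contract (quotient_graph (retract_on Y \<phi>) G) u v
      = quotient_graph ((\<lambda>x. if x = v then u else x) \<circ> retract_on Y \<phi>) G"
    by (simp add: contract_eq_quotient_graph[OF u_vert u(2)] quotient_graph_quotient_graph[OF E2])
  also have "\<dots> = quotient_graph (retract_on (insert v Y) \<phi>) G"
    using \<phi>_R v by (intro quotient_graph_cong[OF _ E]) (auto simp: retract_on_def u_def)
  finally show ?thesis .
qed

text \<open>Every vertex of \<open>Y\<close> has a neighbour in its own fibre of \<open>\<phi>\<close> that lies in \<open>R\<close> or in
  \<open>Y\<close> with smaller \<open>lev\<close>, so the vertices of \<open>Y\<close> can be contracted into their representatives
  one by one, in order of increasing \<open>lev\<close>.\<close>

lemma contracts_to_quotient_graph_retract_on:
  fixes lev :: "'v \<Rightarrow> nat"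
  assumes G: "finite_graph G"
    and \<phi>_R: "\<And>x. x \<in> verts G \<Longrightarrow> \<phi> x \<in> R" and \<phi>_id: "\<And>r. r \<in> R \<Longrightarrow> \<phi> r = r"
    and "finite Y"
  shows "Y \<subseteq> verts G - R \<Longrightarrow>
    \<forall>v\<in>Y. \<exists>w. {w, v} \<in> edges G \<and> \<phi> w = \<phi> v \<and> (w \<in> R \<or> w \<in> Y \<and> lev w < lev v) \<Longrightarrow>
    contracts_to G (quotient_graph (retract_on Y \<phi>) G)"
  using \<open>finite Y\<close>
proof (induction Y rule: finite_ranking_induct[where f = lev])
  case empty
  have "retract_on {} \<phi> = (\<lambda>x. x)" by (simp add: retract_on_def fun_eq_iff)
  then show ?case using quotient_graph_id[OF G] by (auto intro: contracts_to.refl)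
next
  case (insert v Y)
  show ?case
  proof (cases "v \<in> Y")
    case True
    then show ?thesis using insert by (simp add: insert_absorb)
  next
    case False
    have Y: "Y \<subseteq> verts G - R" and v: "v \<in> verts G - R"
      using insert.prems(1) by auto
    have "\<exists>w. {w, y} \<in> edges G \<and> \<phi> w = \<phi> y \<and> (w \<in> R \<or> w \<in> Y \<and> lev w < lev y)" if y: "y \<in> Y" for y
    proof -
      obtain w where w: "{w, y} \<in> edges G" "\<phi> w = \<phi> y" "w \<in> R \<or> w \<in> insert v Y \<and> lev w < lev y"
        using insert.prems(2) y by blast
      moreover have "w \<noteq> v \<or> w \<in> R" using w(3) insert.hyps(2)[OF y] by auto
      ultimately show ?thesis by auto
    qed
    then have "contracts_to G (quotient_graph (retract_on Y \<phi>) G)"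
      using insert.IH Y by blast
    moreover obtain w where "{w, v} \<in> edges G" "\<phi> w = \<phi> v" "w \<in> R \<union> Y"
      using insert.prems(2) False by auto
    ultimately show ?thesis
      using contracts_to_quotient_graph_insert[OF G \<phi>_R \<phi>_id Y v False] by blast
  qed
qed

lemma contracts_to_quotient_graph:
  fixes G :: "'v graph" and lev :: "'v \<Rightarrow> nat"
  assumes G: "finite_graph G"
    and \<phi>_R: "\<And>x. x \<in> verts G \<Longrightarrow> \<phi> x \<in> R" and \<phi>_id: "\<And>r. r \<in> R \<Longrightarrow> \<phi> r = r"
    and witness: "\<And>v. v \<in> verts G - R \<Longrightarrow>
      \<exists>w. {w, v} \<in> edges G \<and> \<phi> w = \<phi> v \<and> (w \<in> R \<or> lev w < lev v)"
  shows "contracts_to G (quotient_graph \<phi> G)"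
proof -
  have E: "\<forall>e\<in>edges G. e \<subseteq> verts G" and V: "finite (verts G - R)"
    using G by (auto simp: finite_graph_def)
  have witness': "\<exists>w. {w, v} \<in> edges G \<and> \<phi> w = \<phi> v \<and> (w \<in> R \<or> w \<in> verts G - R \<and> lev w < lev v)"
    if v: "v \<in> verts G - R" for v
  proof -
    obtain w where w: "{w, v} \<in> edges G" "\<phi> w = \<phi> v" "w \<in> R \<or> lev w < lev v"
      using witness[OF v] by blast
    moreover have "w \<in> verts G" using w(1) E by blast
    ultimately show ?thesis by auto
  qed
  have "contracts_to G (quotient_graph (retract_on (verts G - R) \<phi>) G)"
    by (rule contracts_to_quotient_graph_retract_on[OF G \<phi>_R \<phi>_id V, where lev = lev])
      (use witness' in auto)
  moreover have "quotient_graph (retract_on (verts G - R) \<phi>) G = quotient_graph \<phi> G"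
    using \<phi>_id by (intro quotient_graph_cong[OF _ E]) (auto simp: retract_on_def)
  ultimately show ?thesis by simp
qed

section \<open>Subdivisions\<close>

definition path_vertex :: "('k \<Rightarrow> 'b) \<Rightarrow> ('k \<Rightarrow> 'b) \<Rightarrow> nat \<Rightarrow> 'k \<Rightarrow> nat \<Rightarrow> 'b + 'k \<times> nat" where
  "path_vertex s t L k p = (if p = 0 then Inl (s k) else if p = L then Inl (t k) else Inr (k, p))"

text \<open>Every \<open>k \<in> K\<close> becomes a path of length \<open>L\<close> from \<open>s k\<close> to \<open>t k\<close> through new vertices
  \<open>Inr (k, p)\<close>, \<open>0 < p < L\<close>; the branch vertices \<open>Inl b\<close> are shared.\<close>

definition subdivide ::
    "'b set \<Rightarrow> 'k set \<Rightarrow> ('k \<Rightarrow> 'b) \<Rightarrow> ('k \<Rightarrow> 'b) \<Rightarrow> nat \<Rightarrow> ('b + 'k \<times> nat) graph" where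
  "subdivide B K s t L = (Inl ` B \<union> Inr ` (K \<times> {0<..<L}),
     {{path_vertex s t L k p, path_vertex s t L k (Suc p)} | k p. k \<in> K \<and> p < L})"

lemma verts_subdivide: "verts (subdivide B K s t L) = Inl ` B \<union> Inr ` (K \<times> {0<..<L})"
  and edges_subdivide: "edges (subdivide B K s t L) =
    {{path_vertex s t L k p, path_vertex s t L k (Suc p)} | k p. k \<in> K \<and> p < L}"
  by (simp_all add: subdivide_def verts_def edges_def)

lemma path_vertex_eq_Inr:
  "path_vertex s t L k' q = Inr (k, p) \<longleftrightarrow> q \<noteq> 0 \<and> q \<noteq> L \<and> k' = k \<and> q = p"
  by (auto simp: path_vertex_def)

lemma path_vertex_eq_Inl:
  "path_vertex s t L k q = Inl b \<longleftrightarrow> (q = 0 \<and> s k = b) \<or> (q \<noteq> 0 \<and> q = L \<and> t k = b)"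
  by (auto simp: path_vertex_def)

lemma edge_subdivide:
  "k \<in> K \<Longrightarrow> p < L \<Longrightarrow>
    {path_vertex s t L k p, path_vertex s t L k (Suc p)} \<in> edges (subdivide B K s t L)"
  by (auto simp: edges_subdivide)

locale subdivision =
  fixes B :: "'b set" and K :: "'k set" and s t :: "'k \<Rightarrow> 'b" and L :: nat
  assumes two_le_L: "2 \<le> L" and finite_B: "finite B" and finite_K: "finite K"
    and ends_in_B: "k \<in> K \<Longrightarrow> s k \<in> B \<and> t k \<in> B"
begin

abbreviation "S \<equiv> subdivide B K s t L"
abbreviation "P \<equiv> path_vertex s t L"

lemma finite_graph_subdivide: "finite_graph S"
proof -
  have "e \<subseteq> verts S \<and> card e = 2" if edge: "e \<in> edges S" for e
  proof -
    obtain k p where e: "e = {P k p, P k (Suc p)}" "k \<in> K" "p < L"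
      using edge unfolding edges_subdivide by blast
    then have "P k p \<in> verts S" "P k (Suc p) \<in> verts S"
      using ends_in_B by (auto simp: path_vertex_def verts_subdivide)
    moreover have "P k p \<noteq> P k (Suc p)" using two_le_L by (auto simp: path_vertex_def)
    ultimately show ?thesis using e by auto
  qed
  then show ?thesis using finite_B finite_K by (auto simp: finite_graph_def verts_subdivide)
qed

lemma card_verts_subdivide_le: "card (verts S) \<le> card B + card K * L"
proof -
  have "card (verts S) \<le> card (Inl ` B :: ('b + 'k \<times> nat) set) + card (Inr ` (K \<times> {0<..<L}) :: ('b + 'k \<times> nat) set)"
    by (simp add: verts_subdivide card_Un_le)
  also have "\<dots> \<le> card B + card (K \<times> {0<..<L})"
    by (intro add_mono card_image_le) (use finite_B finite_K in auto)
  also have "card (K \<times> {0<..<L}) \<le> card K * L" by (simp add: card_cartesian_product)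
  finally show ?thesis by simp
qed

lemma edge_subdivideE:
  assumes "{x, w} \<in> edges S"
  obtains k q where "k \<in> K" "q < L" "x = P k q" "w = P k (Suc q)"
    | k q where "k \<in> K" "q < L" "x = P k (Suc q)" "w = P k q"
  using assms by (auto simp: edges_subdivide doubleton_eq_iff)

lemma neighbours_Inr_subset: "neighbours S (Inr (k, p)) \<subseteq> {P k (p - 1), P k (Suc p)}"
proof
  fix w assume "w \<in> neighbours S (Inr (k, p))"
  then have "{Inr (k, p), w} \<in> edges S" by (simp add: neighbours_def)
  then show "w \<in> {P k (p - 1), P k (Suc p)}"
  proof (cases rule: edge_subdivideE)
    case (1 k' q)
    then have "P k' q = Inr (k, p)" by simp
    then have "k' = k" "q = p" by (simp_all add: path_vertex_eq_Inr)
    then show ?thesis using 1 by simp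
  next
    case (2 k' q)
    then have "P k' (Suc q) = Inr (k, p)" by simp
    then have "k' = k" "q = p - 1" by (auto simp: path_vertex_eq_Inr)
    then show ?thesis using 2 by simp
  qed
qed

lemma neighbours_Inl_subset:
  "neighbours S (Inl b) \<subseteq> (\<lambda>k. P k 1) ` {k\<in>K. s k = b} \<union> (\<lambda>k. P k (L - 1)) ` {k\<in>K. t k = b}"
proof
  fix w assume "w \<in> neighbours S (Inl b)"
  then have "{Inl b, w} \<in> edges S" by (simp add: neighbours_def)
  then show "w \<in> (\<lambda>k. P k 1) ` {k\<in>K. s k = b} \<union> (\<lambda>k. P k (L - 1)) ` {k\<in>K. t k = b}"
  proof (cases rule: edge_subdivideE)
    case (1 k q)
    then have "q = 0" "s k = b" using path_vertex_eq_Inl[of s t L k q b] by auto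
    then show ?thesis using 1 by auto
  next
    case (2 k q)
    then have "Suc q = L" "t k = b" using path_vertex_eq_Inl[of s t L k "Suc q" b] by auto
    then show ?thesis using 2 by force
  qed
qed

text \<open>The distance to \<open>Inl b\<close> is at least \<open>dist_lower b\<close>, as the latter changes by at most
  one along every edge.\<close>

definition dist_lower :: "'b \<Rightarrow> 'b + 'k \<times> nat \<Rightarrow> nat" where
  "dist_lower b x = (case x of Inl b' \<Rightarrow> if b' = b then 0 else L
     | Inr (k, p) \<Rightarrow> min (if s k = b then p else L) (if t k = b then L - p else L))"

lemma dist_lower_path_vertex:
  "q \<le> L \<Longrightarrow> dist_lower b (P k q) = min (if s k = b then q else L) (if t k = b then L - q else L)"
  by (auto simp: dist_lower_def path_vertex_def)

lemma dist_lower_le: "walk_within S x (Inl b) n \<Longrightarrow> dist_lower b x \<le> n"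
proof (induction x "Inl b :: 'b + 'k \<times> nat" n rule: walk_within.induct)
  case (here n)
  then show ?case by (simp add: dist_lower_def)
next
  case (step x z n)
  from step(1) show ?case
    using step(3) dist_lower_path_vertex[of _ b] by (cases rule: edge_subdivideE) (auto split: if_splits)
qed

lemma branch_far_apart: "b \<noteq> b' \<Longrightarrow> walk_within S (Inl b) (Inl b') n \<Longrightarrow> L \<le> n"
  using dist_lower_le[of "Inl b" b' n] by (simp add: dist_lower_def)

lemma card_neighbours_Inr_le: "card (neighbours S (Inr (k, p))) \<le> 2"
proof -
  have "card (neighbours S (Inr (k, p))) \<le> card {P k (p - 1), P k (Suc p)}"
    by (rule card_mono[OF _ neighbours_Inr_subset]) simp
  also have "\<dots> \<le> 2" by (cases "P k (p - 1) = P k (Suc p)") auto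
  finally show ?thesis .
qed

lemma subcubic_subdivide:
  assumes "\<And>b. b \<in> B \<Longrightarrow> card {k\<in>K. s k = b} + card {k\<in>K. t k = b} \<le> 3"
  shows "subcubic S (Inl ` B)"
proof
  show "finite_graph S" by (rule finite_graph_subdivide)
  have deg_Inl: "card (neighbours S (Inl b)) \<le> 3" if "b \<in> B" for b
  proof -
    have "card (neighbours S (Inl b))
        \<le> card ((\<lambda>k. P k 1) ` {k\<in>K. s k = b} \<union> (\<lambda>k. P k (L - 1)) ` {k\<in>K. t k = b})"
      by (rule card_mono[OF _ neighbours_Inl_subset]) (use finite_K in auto)
    also have "\<dots> \<le> card {k\<in>K. s k = b} + card {k\<in>K. t k = b}"
      by (rule order_trans[OF card_Un_le add_mono[OF card_image_le card_image_le]])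
        (use finite_K in auto)
    finally show ?thesis using assms[OF that] by linarith
  qed
  fix v assume v: "v \<in> verts S"
  show "card (neighbours S v) \<le> 3"
  proof (cases v)
    case (Inl b)
    then show ?thesis using v deg_Inl by (auto simp: verts_subdivide)
  next
    case (Inr kp)
    then show ?thesis using card_neighbours_Inr_le[of "fst kp" "snd kp"] by simp
  qed
  show "v \<notin> Inl ` B \<Longrightarrow> card (neighbours S v) \<le> 2"
    using v card_neighbours_Inr_le by (auto simp: verts_subdivide)
qed

lemma growth_subdivide_le:
  assumes "\<And>b. b \<in> B \<Longrightarrow> card {k\<in>K. s k = b} + card {k\<in>K. t k = b} \<le> 3"
    and "2 * r \<le> L"
  shows "growth S r \<le> 1 + 3 * r"
proof (rule growth_le_card_graph_ball[OF finite_graph_subdivide])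
  interpret subcubic S "Inl ` B" by (rule subcubic_subdivide[OF assms(1)])
  have far: "L \<le> n" if "x \<in> Inl ` B" "y \<in> Inl ` B" "x \<noteq> y" "walk_within S x y n" for x y n
    using that branch_far_apart by blast
  fix c assume "c \<in> verts S"
  then show "card (graph_ball S c r) \<le> 1 + 3 * r"
    using card_graph_ball_le[of L c r] far assms(2) by blast
qed

lemma growth_subdivide_le_size: "growth S r \<le> card B + card K * L"
  using growth_le_card_verts[OF finite_graph_subdivide, of r] card_verts_subdivide_le by linarith

end

section \<open>A subcubic graph contracting to a given graph\<close>

lemma inj_on_doubleton_eq_iff:
  assumes "inj_on f A" "x \<in> A" "y \<in> A" "p \<in> A" "q \<in> A"
  shows "{f x, f y} = {f p, f q} \<longleftrightarrow> {x, y} = {p, q}"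
  using assms by (simp add: doubleton_eq_iff inj_on_eq_iff[OF assms(1)])

locale graph_enumeration =
  fixes G :: "'a graph" and n m :: nat and vtx :: "nat \<Rightarrow> 'a" and a b :: "nat \<Rightarrow> nat"
  assumes bij_vtx: "bij_betw vtx {..<n} (verts G)"
    and edges_eq: "edges G = {{vtx (a j), vtx (b j)} | j. j < m}"
    and ends_less: "j < m \<Longrightarrow> a j < n \<and> b j < n"
    and ends_neq: "j < m \<Longrightarrow> a j \<noteq> b j"
begin

lemma graph_iso_enumeration:
  assumes H: "graph_enumeration H n m w a b"
  shows "graph_iso G H"
proof -
  interpret H: graph_enumeration H n m w a b by (rule H)
  define idx where "idx = inv_into {..<n} vtx"
  have idx: "bij_betw idx (verts G) {..<n}"
    unfolding idx_def by (rule bij_betw_inv_into[OF bij_vtx])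
  have vtx_idx: "vtx (idx x) = x" if "x \<in> verts G" for x
    using bij_vtx that by (simp add: idx_def bij_betw_inv_into_right)
  have inj_vtx: "inj_on vtx {..<n}" and inj_w: "inj_on w {..<n}"
    using bij_vtx H.bij_vtx by (auto simp: bij_betw_def)
  have "{x, y} \<in> edges G \<longleftrightarrow> {w (idx x), w (idx y)} \<in> edges H"
    if "x \<in> verts G" "y \<in> verts G" for x y
  proof -
    have i: "idx x < n" "idx y < n" using idx that by (auto simp: bij_betw_def)
    have "{x, y} \<in> edges G \<longleftrightarrow> (\<exists>j<m. {vtx (idx x), vtx (idx y)} = {vtx (a j), vtx (b j)})"
      using that by (auto simp: edges_eq vtx_idx)
    also have "\<dots> \<longleftrightarrow> (\<exists>j<m. {idx x, idx y} = {a j, b j})"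
      using i ends_less by (meson inj_on_doubleton_eq_iff[OF inj_vtx] lessThan_iff)
    also have "\<dots> \<longleftrightarrow> (\<exists>j<m. {w (idx x), w (idx y)} = {w (a j), w (b j)})"
      using i ends_less by (meson inj_on_doubleton_eq_iff[OF inj_w] lessThan_iff)
    also have "\<dots> \<longleftrightarrow> {w (idx x), w (idx y)} \<in> edges H"
      by (auto simp: H.edges_eq)
    finally show ?thesis .
  qed
  moreover have "bij_betw (w \<circ> idx) (verts G) (verts H)"
    using idx H.bij_vtx by (rule bij_betw_trans)
  ultimately show ?thesis unfolding graph_iso_def by (intro exI[of _ "w \<circ> idx"]) auto
qed

end

lemma finite_graph_enumeration:
  assumes "finite_graph G"
  shows "\<exists>n m vtx a b. graph_enumeration G n m vtx a b"
proof -
  have V: "finite (verts G)" and E: "\<And>e. e \<in> edges G \<Longrightarrow> e \<subseteq> verts G \<and> card e = 2"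
    using assms by (auto simp: finite_graph_def)
  define n where "n = card (verts G)"
  obtain vtx where vtx: "bij_betw vtx {..<n} (verts G)"
    using ex_bij_betw_nat_finite[OF V] by (auto simp: atLeast0LessThan n_def)
  then have V_eq: "verts G = vtx ` {..<n}" by (simp add: bij_betw_def)
  have "edges G \<subseteq> Pow (verts G)" using E by blast
  then have "finite (edges G)" using V by (simp add: finite_subset)
  then obtain m :: nat and ed where ed: "edges G = ed ` {j. j < m}"
    using finite_imp_nat_seg_image_inj_on by metis
  have "\<exists>p q. p < n \<and> q < n \<and> p \<noteq> q \<and> ed j = {vtx p, vtx q}" if "j < m" for j
  proof -
    have "ed j \<in> edges G" using ed that by blast
    then have "ed j \<subseteq> verts G" "card (ed j) = 2" using E by auto
    then obtain x y where xy: "x \<noteq> y" "ed j = {x, y}" "x \<in> verts G" "y \<in> verts G"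
      by (auto simp: card_2_iff)
    then obtain p q where "p < n" "q < n" "x = vtx p" "y = vtx q"
      unfolding V_eq by auto
    then show ?thesis using xy by blast
  qed
  then obtain a b where ab: "\<And>j. j < m \<Longrightarrow> a j < n \<and> b j < n \<and> a j \<noteq> b j \<and> ed j = {vtx (a j), vtx (b j)}"
    by metis
  have "edges G = {{vtx (a j), vtx (b j)} | j. j < m}"
    unfolding ed using ab by blast
  then have "graph_enumeration G n m vtx a b"
    using vtx ab by unfold_locales auto
  then show ?thesis by blast
qed

type_synonym cubic_vertex = "(nat \<times> nat) + ((nat \<times> nat) + nat) \<times> nat"

context graph_enumeration
begin

text \<open>The vertex \<open>i\<close> of \<open>G\<close> is stretched into the path of branch vertices
  \<open>(i, 0), \<dots>, (i, m)\<close> (paths \<open>Inl (i, j)\<close>), and the edge \<open>j\<close> becomes a path \<open>Inr j\<close> from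
  \<open>(a j, j)\<close> to \<open>(b j, j)\<close>. Each branch vertex then lies on at most three paths.\<close>

definition cubic_branches :: "(nat \<times> nat) set" where
  "cubic_branches = {..<n} \<times> {..m}"

definition cubic_paths :: "((nat \<times> nat) + nat) set" where
  "cubic_paths = Inl ` ({..<n} \<times> {..<m}) \<union> Inr ` {..<m}"

fun cubic_src :: "(nat \<times> nat) + nat \<Rightarrow> nat \<times> nat" where
  "cubic_src (Inl (i, j)) = (i, j)"
| "cubic_src (Inr j) = (a j, j)"

fun cubic_tgt :: "(nat \<times> nat) + nat \<Rightarrow> nat \<times> nat" where
  "cubic_tgt (Inl (i, j)) = (i, Suc j)"
| "cubic_tgt (Inr j) = (b j, j)"

abbreviation cubic_model :: "nat \<Rightarrow> cubic_vertex graph" where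
  "cubic_model L \<equiv> subdivide cubic_branches cubic_paths cubic_src cubic_tgt L"

lemma subdivision_cubic_model:
  "2 \<le> L \<Longrightarrow> subdivision cubic_branches cubic_paths cubic_src cubic_tgt L"
  by unfold_locales (auto simp: cubic_branches_def cubic_paths_def ends_less)

lemma card_cubic_ends_le_3:
  "card {k\<in>cubic_paths. cubic_src k = x} + card {k\<in>cubic_paths. cubic_tgt k = x} \<le> 3"
proof -
  obtain i j where x: "x = (i, j)" by fastforce
  have card_le: "card A \<le> 2" if "A \<subseteq> {p, q}" for A and p q :: "(nat \<times> nat) + nat"
  proof -
    have "card A \<le> card {p, q}" using that by (intro card_mono) auto
    also have "\<dots> \<le> 2" by (cases "p = q") auto
    finally show ?thesis .
  qed
  have card_le1: "card A \<le> 1" if "A \<subseteq> {p}" for A and p :: "(nat \<times> nat) + nat"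
    using card_mono[OF _ that] by simp
  have src: "{k\<in>cubic_paths. cubic_src k = x} \<subseteq> {Inl (i, j), Inr j}"
    and tgt: "{k\<in>cubic_paths. cubic_tgt k = x} \<subseteq> {Inl (i, j - 1), Inr j}"
    by (auto simp: cubic_paths_def x)
  show ?thesis
  proof (cases "j < m \<and> a j = i")
    case True
    then have "Inr j \<notin> {k\<in>cubic_paths. cubic_tgt k = x}"
      using ends_neq[of j] by (auto simp: x)
    then have "{k\<in>cubic_paths. cubic_tgt k = x} \<subseteq> {Inl (i, j - 1)}"
      using tgt by blast
    then have "card {k\<in>cubic_paths. cubic_tgt k = x} \<le> 1" by (rule card_le1)
    with card_le[OF src] show ?thesis by linarith
  next
    case False
    then have "Inr j \<notin> {k\<in>cubic_paths. cubic_src k = x}"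
      by (auto simp: cubic_paths_def x)
    then have "{k\<in>cubic_paths. cubic_src k = x} \<subseteq> {Inl (i, j)}"
      using src by blast
    then have "card {k\<in>cubic_paths. cubic_src k = x} \<le> 1" by (rule card_le1)
    with card_le[OF tgt] show ?thesis by linarith
  qed
qed

text \<open>Contracting each stretched vertex \<open>i\<close> together with its paths \<open>Inl (i, j)\<close> onto \<open>(i, 0)\<close>,
  and each edge path \<open>Inr j\<close> except its last edge onto \<open>(a j, 0)\<close>, gives back \<open>G\<close>.
  Every contracted vertex has a neighbour with the same \<open>owner\<close> and smaller \<open>depth\<close>.\<close>

fun owner :: "cubic_vertex \<Rightarrow> nat" where
  "owner (Inl (i, j)) = i"
| "owner (Inr (Inl (i, j), p)) = i"
| "owner (Inr (Inr j, p)) = a j"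

fun depth :: "nat \<Rightarrow> cubic_vertex \<Rightarrow> nat" where
  "depth L (Inl (i, j)) = j * L"
| "depth L (Inr (Inl (i, j), p)) = j * L + p"
| "depth L (Inr (Inr j, p)) = m * L + p"

abbreviation root_vertex :: "nat \<Rightarrow> cubic_vertex" where
  "root_vertex i \<equiv> Inl (i, 0)"

abbreviation root :: "cubic_vertex \<Rightarrow> cubic_vertex" where
  "root x \<equiv> root_vertex (owner x)"

abbreviation roots :: "cubic_vertex set" where
  "roots \<equiv> root_vertex ` {..<n}"

context
  fixes L :: nat
  assumes two_le_L: "2 \<le> L"
begin

interpretation subdivision cubic_branches cubic_paths cubic_src cubic_tgt L
  by (rule subdivision_cubic_model[OF two_le_L])

lemma owner_path_vertex:
  assumes "q \<le> L"
  shows "owner (P k q) = (case k of Inl (i, j) \<Rightarrow> i | Inr j \<Rightarrow> if q = L then b j else a j)"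
  using assms two_le_L by (cases k) (auto simp: path_vertex_def)

lemma owner_less: "x \<in> verts S \<Longrightarrow> owner x < n"
  by (auto simp: verts_subdivide cubic_branches_def cubic_paths_def ends_less)

lemma contraction_witness_Inl:
  assumes v: "Inl (i, j) \<in> verts S - roots"
  shows "\<exists>w. {w, Inl (i, j)} \<in> edges S \<and> owner w = i \<and> depth L w < j * L"
proof -
  have ij: "i < n" "j \<le> m" "j \<noteq> 0" using v by (auto simp: verts_subdivide cubic_branches_def)
  define k where "k = (Inl (i, j - 1) :: (nat \<times> nat) + nat)"
  have "k \<in> cubic_paths" using ij by (auto simp: k_def cubic_paths_def)
  then have "{P k (L - 1), P k (Suc (L - 1))} \<in> edges S"
    using two_le_L by (intro edge_subdivide) auto
  moreover have "P k (Suc (L - 1)) = Inl (i, j)" "P k (L - 1) = Inr (k, L - 1)"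
    using two_le_L ij by (auto simp: path_vertex_def k_def)
  moreover have "(j - 1) * L + (L - 1) < j * L"
    using two_le_L ij(3) by (cases j) auto
  ultimately show ?thesis by (intro exI[of _ "Inr (k, L - 1)"]) (simp add: k_def)
qed

lemma contraction_witness_Inr:
  assumes v: "Inr (k, p) \<in> verts S"
  shows "\<exists>w. {w, Inr (k, p)} \<in> edges S \<and> owner w = owner (Inr (k, p)) \<and>
    depth L w < depth L (Inr (k, p))"
proof -
  have k: "k \<in> cubic_paths" and p: "0 < p" "p < L"
    using v by (auto simp: verts_subdivide)
  have "{P k (p - 1), P k (Suc (p - 1))} \<in> edges S"
    using k p by (intro edge_subdivide) auto
  moreover have "P k (Suc (p - 1)) = Inr (k, p)" "P k p = Inr (k, p)"
    using p by (simp_all add: path_vertex_def)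
  moreover have "owner (P k (p - 1)) = owner (P k p)"
    using owner_path_vertex[of p k] owner_path_vertex[of "p - 1" k] p by (auto split: sum.splits)
  moreover have "depth L (P k (p - 1)) < depth L (Inr (k, p))"
  proof (cases "p = 1")
    case True
    have "j * L < Suc (m * L)" if "j < m" for j
      using mult_le_mono1[OF less_imp_le[OF that], of L] by linarith
    then show ?thesis
      using k True by (cases k) (auto simp: path_vertex_def cubic_paths_def)
  next
    case False
    then show ?thesis using p by (cases k) (auto simp: path_vertex_def)
  qed
  ultimately show ?thesis by metis
qed

lemma contraction_witness:
  assumes "v \<in> verts S - roots"
  shows "\<exists>w. {w, v} \<in> edges S \<and> owner w = owner v \<and> (w \<in> roots \<or> depth L w < depth L v)"
proof (cases v)
  case (Inl x)
  obtain i j where v: "v = Inl (i, j)" using Inl by (cases x) auto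
  then obtain w where "{w, v} \<in> edges S" "owner w = i" "depth L w < j * L"
    using contraction_witness_Inl assms by blast
  then show ?thesis using v by auto
next
  case (Inr x)
  obtain k p where v: "v = Inr (k, p)" using Inr by (cases x) auto
  then show ?thesis using contraction_witness_Inr assms by blast
qed

lemma contracts_to_cubic_model:
  "contracts_to S (quotient_graph root S)"
proof (rule contracts_to_quotient_graph[OF finite_graph_subdivide, where lev = "depth L"])
  show "root x \<in> roots" if "x \<in> verts S" for x
    using owner_less[OF that] by simp
  show "root r = r" if "r \<in> roots" for r
    using that by auto
  show "\<exists>w. {w, v} \<in> edges S \<and> root w = root v \<and> (w \<in> roots \<or> depth L w < depth L v)"
    if "v \<in> verts S - roots" for v
    using contraction_witness[OF that] by simp
qed

lemma root_image_edge:
  assumes "p < L"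
  shows "root ` {P k p, P k (Suc p)} = (case k of
      Inl (i, j) \<Rightarrow> {root_vertex i}
    | Inr j \<Rightarrow> {root_vertex (a j), root_vertex (if Suc p = L then b j else a j)})"
  using assms owner_path_vertex[of p k] owner_path_vertex[of "Suc p" k]
  by (auto split: sum.splits)

lemma edges_quotient_cubic_model:
  "edges (quotient_graph root S) = {{root_vertex (a j), root_vertex (b j)} | j. j < m}"
proof (intro equalityI subsetI)
  fix x assume "x \<in> edges (quotient_graph root S)"
  then obtain k p where kp: "k \<in> cubic_paths" "p < L"
    and x: "x = root ` {P k p, P k (Suc p)}" "card x = 2"
    by (auto simp: edges_subdivide)
  show "x \<in> {{root_vertex (a j), root_vertex (b j)} | j. j < m}"
  proof (cases k)
    case (Inl ij)
    then show ?thesis using x root_image_edge[OF kp(2), of k] by (auto split: prod.splits)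
  next
    case (Inr j)
    then have "Suc p = L" "x = {root_vertex (a j), root_vertex (b j)}"
      using x root_image_edge[OF kp(2), of k] by (auto split: if_splits)
    moreover have "j < m" using kp(1) Inr by (auto simp: cubic_paths_def)
    ultimately show ?thesis by blast
  qed
next
  fix x :: "cubic_vertex set" assume "x \<in> {{root_vertex (a j), root_vertex (b j)} | j. j < m}"
  then obtain j where j: "j < m" "x = {root_vertex (a j), root_vertex (b j)}" by blast
  have "L - 1 < L" "Suc (L - 1) = L" using two_le_L by auto
  moreover have "Inr j \<in> cubic_paths" using j(1) by (simp add: cubic_paths_def)
  ultimately have e: "{P (Inr j) (L - 1), P (Inr j) (Suc (L - 1))} \<in> edges S"
    by (intro edge_subdivide) auto
  have image: "root ` {P (Inr j) (L - 1), P (Inr j) (Suc (L - 1))} = x"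
    using root_image_edge[OF \<open>L - 1 < L\<close>, of "Inr j"] \<open>Suc (L - 1) = L\<close> j(2) by simp
  have card_x: "card x = 2" using j ends_neq by simp
  have "{P (Inr j) (L - 1), P (Inr j) (Suc (L - 1))}
      \<in> {e \<in> edges S. card (root ` e) = 2}"
    using e card_x image by simp
  then show "x \<in> edges (quotient_graph root S)"
    unfolding edges_quotient_graph image[symmetric] by blast
qed

lemma graph_enumeration_quotient_cubic_model:
  "graph_enumeration (quotient_graph root S) n m root_vertex a b"
proof
  have "root_vertex ` {..<n} = root ` verts S"
  proof (intro equalityI subsetI)
    fix y assume "y \<in> root_vertex ` {..<n}"
    then obtain i where "i < n" "y = root_vertex i" by blast
    moreover have "root_vertex i \<in> verts S"
      using \<open>i < n\<close> by (simp add: verts_subdivide cubic_branches_def)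
    ultimately show "y \<in> root ` verts S" by force
  next
    fix y assume "y \<in> root ` verts S"
    then show "y \<in> root_vertex ` {..<n}" using owner_less by auto
  qed
  then show "bij_betw root_vertex {..<n} (verts (quotient_graph root S))"
    by (simp add: bij_betw_def inj_on_def)
qed (use edges_quotient_cubic_model ends_less ends_neq in auto)

lemma minor_cubic_model: "minor G S"
proof -
  have "subgraph S S" using finite_graph_subdivide by (simp add: subgraph_def finite_graph_def)
  moreover have "graph_iso G (quotient_graph root S)"
    by (rule graph_iso_enumeration[OF graph_enumeration_quotient_cubic_model])
  ultimately show ?thesis
    using contracts_to_cubic_model unfolding minor_def by blast
qed

end

end

lemma superlinear_imp_linear_le:
  assumes "superlinear f"
  obtains R where "\<And>r. R \<le> r \<Longrightarrow> C * real r \<le> f r"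
proof -
  obtain R where R: "\<And>r. R \<le> r \<Longrightarrow> C \<le> f r / real r"
    using assms unfolding superlinear_def filterlim_at_top eventually_sequentially by blast
  show ?thesis
  proof
    fix r assume r: "Suc R \<le> r"
    then have "C \<le> f r / real r" using R by simp
    then show "C * real r \<le> f r" using r by (simp add: pos_le_divide_eq)
  qed
qed

lemma exists_subdivision_growth_le:
  fixes f :: "nat \<Rightarrow> real"
  assumes f: "superlinear f" "\<forall>r\<ge>1. f r \<ge> 1 + 3 * real r"
    and subdivision: "\<And>L. 2 \<le> L \<Longrightarrow> subdivision B K s t L"
    and degree: "\<And>b. b \<in> B \<Longrightarrow> card {k\<in>K. s k = b} + card {k\<in>K. t k = b} \<le> 3"
  shows "\<exists>L\<ge>2. \<forall>r\<ge>1. real (growth (subdivide B K s t L) r) \<le> f r"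
proof -
  define C where "C = card B + 2 * card K"
  obtain R where R: "\<And>r. R \<le> r \<Longrightarrow> real C * real r \<le> f r"
    using superlinear_imp_linear_le[OF f(1)] by blast
  define L where "L = 2 * R + 2"
  interpret subdivision B K s t L by (rule subdivision) (simp add: L_def)
  have "real (growth S r) \<le> f r" if r: "1 \<le> r" for r
  proof (cases "2 * r \<le> L")
    case True
    have "growth S r \<le> 1 + 3 * r" by (rule growth_subdivide_le[OF degree True])
    then show ?thesis using f(2) r by fastforce
  next
    case False
    have "growth S r \<le> card B + card K * L" by (rule growth_subdivide_le_size)
    also have "\<dots> \<le> card B * r + card K * (2 * r)"
      using False r by (intro add_mono) simp_all
    also have "\<dots> = C * r" by (simp add: C_def algebra_simps)
    finally have "real (growth S r) \<le> real C * real r" by (simp flip: of_nat_mult)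
    also have "\<dots> \<le> f r" using R False by (simp add: L_def)
    finally show ?thesis .
  qed
  moreover have "2 \<le> L" by (simp add: L_def)
  ultimately show ?thesis by blast
qed

theorem corollary20:
  fixes f :: "nat \<Rightarrow> real" and G :: "'a graph"
  assumes "superlinear f"
    and "\<forall>r\<ge>1. f r \<ge> 1 + 3 * real r"
    and "finite_graph G"
  shows "\<exists>G' :: nat graph. finite_graph G' \<and> minor G G' \<and>
           (\<forall>r\<ge>1. real (growth G' r) \<le> f r)"
proof -
  obtain n m vtx a b where "graph_enumeration G n m vtx a b"
    using finite_graph_enumeration[OF assms(3)] by blast
  then interpret graph_enumeration G n m vtx a b .
  obtain L where L: "2 \<le> L" and growth: "\<forall>r\<ge>1. real (growth (cubic_model L) r) \<le> f r"
    using exists_subdivision_growth_le[OF assms(1,2) subdivision_cubic_model card_cubic_ends_le_3]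
    by blast
  interpret subdivision cubic_branches cubic_paths cubic_src cubic_tgt L
    by (rule subdivision_cubic_model[OF L])
  let ?G' = "map_graph to_nat (cubic_model L)"
  have "finite_graph ?G'" by (rule finite_graph_map_graph[OF inj_to_nat finite_graph_subdivide])
  moreover have "minor G ?G'" by (rule minor_map_graph[OF inj_to_nat minor_cubic_model[OF L]])
  moreover have "real (growth ?G' r) \<le> f r" if "1 \<le> r" for r
  proof -
    have "growth ?G' r \<le> growth (cubic_model L) r"
      by (rule growth_map_graph_le[OF inj_to_nat finite_graph_subdivide])
    then show ?thesis using growth that by (meson of_nat_le_iff order_trans)
  qed
  ultimately show ?thesis by blast
qed

end
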